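(* The structure $\mathbb{M}_1=(\{0,1,2\};\psi_2,\mu_2,\{0\},\{1\},\{2\})$ pp-constructs $\mathbb{M}_1''=(\{0,1,2\};\psi_2,\psi_2',\mu_2,\{0,1\},\{1,2\},\{0,2\},\{0\},\{1\},\{2\})$, and $\mathbb{M}_1''$ pp-constructs $\mathbb{M}_1$.
   Context: $\psi_2=\{(0,1),(1,0),(2,2)\}$, $\psi_2'=\{(0,1),(1,0)\}$, and $\mu_2$ is the equivalence relation on $\{0,1,2\}$ with classes $\{0,1\},\{2\}$. A relation is pp-definable in $\mathbb{A}$ if definable by a formula using the relations of $\mathbb{A}$, equality, conjunction and existential quantification. A pp-power of $\mathbb{A}$ is a structure isomorphic to one with domain $A^n$ whose $k$-ary relations, viewed as $kn$-ary relations on $A$, are pp-definable in $\mathbb{A}$. $\mathbb{A}$ pp-constructs $\mathbb{B}$ if $\mathbb{B}$ is homomorphically equivalent (homomorphisms in both directions) to a pp-power of $\mathbb{A}$. *)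

theory Defs
  imports Main
begin

text \<open>The signature is the list of arities; relations are identified by position.\<close>
type_synonym 'a rstruct = "'a set \<times> (nat \<times> 'a list set) list"

definition dom_of :: "'a rstruct \<Rightarrow> 'a set" where
  "dom_of S = fst S"

definition rels_of :: "'a rstruct \<Rightarrow> (nat \<times> 'a list set) list" where
  "rels_of S = snd S"

definition wf_struct :: "'a rstruct \<Rightarrow> bool" where
  "wf_struct S \<longleftrightarrow> (\<forall>(k, R) \<in> set (rels_of S).
      \<forall>t \<in> R. length t = k \<and> set t \<subseteq> dom_of S)"

datatype ppf = PAtom nat "nat list" | PEq nat nat | PConj ppf ppf | PEx nat ppf

fun pp_sat :: "'a rstruct \<Rightarrow> (nat \<Rightarrow> 'a) \<Rightarrow> ppf \<Rightarrow> bool" where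
  "pp_sat S e (PAtom i vs) \<longleftrightarrow> i < length (rels_of S) \<and> map e vs \<in> snd (rels_of S ! i)"
| "pp_sat S e (PEq x y) \<longleftrightarrow> e x = e y"
| "pp_sat S e (PConj \<phi> \<psi>) \<longleftrightarrow> pp_sat S e \<phi> \<and> pp_sat S e \<psi>"
| "pp_sat S e (PEx x \<phi>) \<longleftrightarrow> (\<exists>a \<in> dom_of S. pp_sat S (e(x := a)) \<phi>)"

text \<open>The k-ary relation defined by a pp-formula, with free variables 0..k-1
  (any further free variables are read existentially over the domain).\<close>
definition pp_defined :: "'a rstruct \<Rightarrow> nat \<Rightarrow> ppf \<Rightarrow> 'a list set" where
  "pp_defined S k \<phi> = {t. length t = k \<and> set t \<subseteq> dom_of S \<and>
      (\<exists>e. (\<forall>i. e i \<in> dom_of S) \<and> (\<forall>i<k. e i = t ! i) \<and> pp_sat S e \<phi>)}"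

definition pp_definable :: "'a rstruct \<Rightarrow> nat \<Rightarrow> 'a list set \<Rightarrow> bool" where
  "pp_definable S k R \<longleftrightarrow> (\<exists>\<phi>. R = pp_defined S k \<phi>)"

text \<open>C is a pp-power of S with exponent n: domain is S^n (lists of length n),
  and each k-ary relation, viewed as a kn-ary relation on the domain of S
  (by concatenating the tuple entries), is pp-definable in S.\<close>
definition pp_power :: "'a rstruct \<Rightarrow> nat \<Rightarrow> 'a list rstruct \<Rightarrow> bool" where
  "pp_power S n C \<longleftrightarrow>
     dom_of C = {xs. length xs = n \<and> set xs \<subseteq> dom_of S} \<and> wf_struct C \<and>
     (\<forall>(k, R) \<in> set (rels_of C). pp_definable S (k * n) (concat ` R))"

definition is_hom :: "('a \<Rightarrow> 'b) \<Rightarrow> 'a rstruct \<Rightarrow> 'b rstruct \<Rightarrow> bool" where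
  "is_hom h A B \<longleftrightarrow>
     map fst (rels_of A) = map fst (rels_of B) \<and>
     h ` dom_of A \<subseteq> dom_of B \<and>
     (\<forall>i < length (rels_of A). \<forall>t \<in> snd (rels_of A ! i). map h t \<in> snd (rels_of B ! i))"

definition hom_equiv :: "'a rstruct \<Rightarrow> 'b rstruct \<Rightarrow> bool" where
  "hom_equiv A B \<longleftrightarrow> (\<exists>h. is_hom h A B) \<and> (\<exists>g. is_hom g B A)"

definition pp_constructs :: "'a rstruct \<Rightarrow> 'b rstruct \<Rightarrow> bool" where
  "pp_constructs A B \<longleftrightarrow>
     (\<exists>n \<ge> 1. \<exists>C :: 'a list rstruct. pp_power A n C \<and> hom_equiv B C)"

definition psi2 :: "nat list set" where "psi2 = {[0,1],[1,0],[2,2]}"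
definition psi2' :: "nat list set" where "psi2' = {[0,1],[1,0]}"
definition mu2 :: "nat list set" where
  "mu2 = {[x,y] | x y. x \<in> {0,1} \<and> y \<in> {0,1}} \<union> {[2,2]}"

definition M1 :: "nat rstruct" where
  "M1 = ({0,1,2}, [(2, psi2), (2, mu2), (1, {[0]}), (1, {[1]}), (1, {[2]})])"

definition M1'' :: "nat rstruct" where
  "M1'' = ({0,1,2}, [(2, psi2), (2, psi2'), (2, mu2),
     (1, {[0],[1]}), (1, {[1],[2]}), (1, {[0],[2]}),
     (1, {[0]}), (1, {[1]}), (1, {[2]})])"

end

theory Submission
  imports Defs
begin

text \<open>\<open>M\<^sub>1\<close> is a reduct of \<open>M\<^sub>1''\<close>, so the first pp-power of \<open>M\<^sub>1''\<close> given by the atoms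
  \<open>\<psi>\<^sub>2, \<mu>\<^sub>2, {0}, {1}, {2}\<close> is isomorphic to \<open>M\<^sub>1\<close>.
  Conversely, encode \<open>x\<close> in the square of \<open>M\<^sub>1\<close> as the pair \<open>(r, x)\<close>, where \<open>r \<in> {0, 2}\<close>
  represents the \<open>\<mu>\<^sub>2\<close>-class of \<open>x\<close>. Then the constant \<open>r = 0\<close> separates \<open>{0, 1}\<close> from \<open>{2}\<close>,
  \<open>\<psi>\<^sub>2'\<close> is \<open>\<psi>\<^sub>2\<close> on second coordinates restricted to \<open>r = 0\<close>, and \<open>{1, 2}\<close> and \<open>{0, 2}\<close>
  become the binary relations \<open>\<psi>\<^sub>2\<close> and \<open>=\<close> between the two coordinates of one pair. Sending
  \<open>(0, 1)\<close> and \<open>(1, 0)\<close> to \<open>1\<close>, \<open>(2, 2)\<close> to \<open>2\<close> and all other pairs to \<open>0\<close> is a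
  homomorphism back, so the two structures are homomorphically equivalent.\<close>

fun pp_qfree :: "nat \<Rightarrow> ppf \<Rightarrow> bool" where
  "pp_qfree k (PAtom i vs) \<longleftrightarrow> (\<forall>v \<in> set vs. v < k)"
| "pp_qfree k (PEq x y) \<longleftrightarrow> x < k \<and> y < k"
| "pp_qfree k (PConj \<phi> \<psi>) \<longleftrightarrow> pp_qfree k \<phi> \<and> pp_qfree k \<psi>"
| "pp_qfree k (PEx x \<phi>) \<longleftrightarrow> False"

lemma pp_sat_qfree_cong:
  assumes "pp_qfree k \<phi>" and "\<forall>i<k. e i = e' i"
  shows "pp_sat S e \<phi> \<longleftrightarrow> pp_sat S e' \<phi>"
  using assms
proof (induction \<phi>)
  case (PAtom i vs)
  then have "map e vs = map e' vs" by (simp add: map_eq_conv)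
  then show ?case by (simp only: pp_sat.simps)
qed auto

text \<open>Positions of \<open>t\<close> beyond \<open>k\<close> are unspecified, but a formula with \<open>pp_qfree k \<phi>\<close> never reads them.\<close>

lemma pp_defined_qfree:
  assumes "pp_qfree k \<phi>" and "dom_of S \<noteq> {}"
  shows "pp_defined S k \<phi> = {t. length t = k \<and> set t \<subseteq> dom_of S \<and> pp_sat S ((!) t) \<phi>}"
proof (intro set_eqI iffI)
  fix t assume "t \<in> pp_defined S k \<phi>"
  then obtain e where t: "length t = k" "set t \<subseteq> dom_of S" and "\<forall>i<k. e i = t ! i" "pp_sat S e \<phi>"
    unfolding pp_defined_def by blast
  then have "pp_sat S ((!) t) \<phi>"
    using pp_sat_qfree_cong[OF assms(1)] by blast
  with t show "t \<in> {t. length t = k \<and> set t \<subseteq> dom_of S \<and> pp_sat S ((!) t) \<phi>}" by blast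
next
  fix t assume t: "t \<in> {t. length t = k \<and> set t \<subseteq> dom_of S \<and> pp_sat S ((!) t) \<phi>}"
  obtain a where a: "a \<in> dom_of S" using assms(2) by blast
  define e where "e i = (if i < k then t ! i else a)" for i
  have "\<forall>i. e i \<in> dom_of S" using t a nth_mem by (fastforce simp: e_def)
  moreover have "pp_sat S e \<phi>"
    using t pp_sat_qfree_cong[OF assms(1), of e "(!) t"] by (simp add: e_def)
  ultimately show "t \<in> pp_defined S k \<phi>"
    using t unfolding pp_defined_def by (intro CollectI conjI exI[of _ e]) (auto simp: e_def)
qed

fun chunks :: "nat \<Rightarrow> 'a list \<Rightarrow> 'a list list" where
  "chunks n xs = (if n = 0 \<or> xs = [] then [] else take n xs # chunks n (drop n xs))"

declare chunks.simps [simp del]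

lemma concat_chunks: "0 < n \<Longrightarrow> concat (chunks n xs) = xs"
  by (induction n xs rule: chunks.induct) (subst chunks.simps; simp)

lemma chunks_concat:
  assumes "0 < n" and "\<forall>xs \<in> set xss. length xs = n"
  shows "chunks n (concat xss) = xss"
  using assms(2)
proof (induction xss)
  case Nil
  then show ?case by (simp add: chunks.simps)
next
  case (Cons xs xss)
  then show ?case using assms(1) by (subst chunks.simps) auto
qed

lemma chunks_of_length_mult:
  assumes "length xs = k * n" and "0 < n"
  shows "length (chunks n xs) = k \<and> (\<forall>c \<in> set (chunks n xs). length c = n \<and> set c \<subseteq> set xs)"
  using assms
proof (induction k arbitrary: xs)
  case 0
  then show ?case by (simp add: chunks.simps)
next
  case (Suc k)
  then have "chunks n xs = take n xs # chunks n (drop n xs)"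
    by (auto simp: chunks.simps)
  moreover have "length (drop n xs) = k * n"
    using Suc.prems by simp
  ultimately show ?case
    using Suc.IH[of "drop n xs"] Suc.prems by (auto dest: in_set_dropD set_take_subset[THEN subsetD])
qed

definition pp_power_struct :: "'a rstruct \<Rightarrow> nat \<Rightarrow> (nat \<times> ppf) list \<Rightarrow> 'a list rstruct" where
  "pp_power_struct S n fs = ({xs. length xs = n \<and> set xs \<subseteq> dom_of S},
     map (\<lambda>(k, \<phi>). (k, chunks n ` pp_defined S (k * n) \<phi>)) fs)"

lemma pp_defined_length_set: "t \<in> pp_defined S k \<phi> \<Longrightarrow> length t = k \<and> set t \<subseteq> dom_of S"
  unfolding pp_defined_def by blast

lemma pp_power_pp_power_struct:
  assumes "0 < n"
  shows "pp_power S n (pp_power_struct S n fs)"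
  unfolding pp_power_def
proof (intro conjI)
  show "dom_of (pp_power_struct S n fs) = {xs. length xs = n \<and> set xs \<subseteq> dom_of S}"
    by (simp add: pp_power_struct_def dom_of_def)
  have "length t = k \<and> set t \<subseteq> dom_of (pp_power_struct S n fs)"
    if "t \<in> chunks n ` pp_defined S (k * n) \<phi>" for t k \<phi>
    using that pp_defined_length_set chunks_of_length_mult[OF _ assms]
    by (fastforce simp: pp_power_struct_def dom_of_def)
  then show "wf_struct (pp_power_struct S n fs)"
    unfolding wf_struct_def by (auto simp: pp_power_struct_def rels_of_def)
  have "concat ` chunks n ` pp_defined S (k * n) \<phi> = pp_defined S (k * n) \<phi>" for k \<phi>
    by (simp add: image_image concat_chunks[OF assms])
  then show "\<forall>(k, R) \<in> set (rels_of (pp_power_struct S n fs)). pp_definable S (k * n) (concat ` R)"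
    unfolding pp_definable_def by (auto simp: pp_power_struct_def rels_of_def)
qed

lemma pp_constructs_pp_power_struct:
  assumes "0 < n" and "is_hom h B (pp_power_struct A n fs)" and "is_hom g (pp_power_struct A n fs) B"
  shows "pp_constructs A B"
proof -
  have "1 \<le> n" using assms(1) by simp
  then show ?thesis
    unfolding pp_constructs_def hom_equiv_def
    using pp_power_pp_power_struct[OF assms(1)] assms(2,3) by blast
qed

lemma is_hom_iff_list_all2:
  "is_hom h A B \<longleftrightarrow> h ` dom_of A \<subseteq> dom_of B \<and>
     list_all2 (\<lambda>r r'. fst r = fst r' \<and> (\<forall>t \<in> snd r. map h t \<in> snd r')) (rels_of A) (rels_of B)"
  unfolding is_hom_def list_all2_conv_all_nth list_eq_iff_nth_eq by auto

lemma is_hom_to_pp_power_struct: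
  assumes "0 < n" and "dom_of A \<noteq> {}" and "wf_struct B"
    and "\<forall>x \<in> dom_of B. length (h x) = n \<and> set (h x) \<subseteq> dom_of A"
    and "list_all2 (\<lambda>r (k, \<phi>). fst r = k \<and> pp_qfree (k * n) \<phi> \<and>
           (\<forall>t \<in> snd r. pp_sat A ((!) (concat (map h t))) \<phi>)) (rels_of B) fs"
  shows "is_hom h B (pp_power_struct A n fs)"
  unfolding is_hom_iff_list_all2
proof
  show "h ` dom_of B \<subseteq> dom_of (pp_power_struct A n fs)"
    using assms(4) by (auto simp: pp_power_struct_def dom_of_def)
  have map_in_chunks: "map h t \<in> chunks n ` pp_defined A (k * n) \<phi>"
    if "(k, R) \<in> set (rels_of B)" "t \<in> R" "pp_qfree (k * n) \<phi>" "pp_sat A ((!) (concat (map h t))) \<phi>"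
    for k R t \<phi>
  proof
    have "\<forall>t \<in> R. length t = k \<and> set t \<subseteq> dom_of B"
      using assms(3) that(1) unfolding wf_struct_def by fastforce
    then have t: "length t = k" "set t \<subseteq> dom_of B"
      using that(2) by auto
    then have "length (concat (map h t)) = k * n"
      using assms(4) by (induction t arbitrary: k) auto
    moreover have "set (concat (map h t)) \<subseteq> dom_of A"
      using t(2) assms(4) by auto
    ultimately show "concat (map h t) \<in> pp_defined A (k * n) \<phi>"
      using that(3,4) pp_defined_qfree[OF _ assms(2)] by simp
    have "\<forall>x \<in> set (map h t). length x = n"
      using t(2) assms(4) by auto
    then show "map h t = chunks n (concat (map h t))"
      using chunks_concat[OF assms(1)] by metis
  qed
  show "list_all2 (\<lambda>r r'. fst r = fst r' \<and> (\<forall>t \<in> snd r. map h t \<in> snd r'))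
      (rels_of B) (rels_of (pp_power_struct A n fs))"
    unfolding pp_power_struct_def rels_of_def snd_conv list_all2_map2
    by (rule list.rel_mono_strong[OF assms(5)[unfolded rels_of_def]])
      (use map_in_chunks in \<open>auto simp: rels_of_def\<close>)
qed

lemma is_hom_from_pp_power_struct:
  assumes "dom_of A \<noteq> {}"
    and "\<forall>xs. length xs = n \<longrightarrow> set xs \<subseteq> dom_of A \<longrightarrow> g xs \<in> dom_of B"
    and "list_all2 (\<lambda>(k, \<phi>) r. k = fst r \<and> pp_qfree (k * n) \<phi> \<and>
           (\<forall>s. length s = k * n \<longrightarrow> set s \<subseteq> dom_of A \<longrightarrow> pp_sat A ((!) s) \<phi> \<longrightarrow>
              map g (chunks n s) \<in> snd r)) fs (rels_of B)"
  shows "is_hom g (pp_power_struct A n fs) B"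
  unfolding is_hom_iff_list_all2
proof
  show "g ` dom_of (pp_power_struct A n fs) \<subseteq> dom_of B"
    using assms(2) by (auto simp: pp_power_struct_def dom_of_def)
  show "list_all2 (\<lambda>r r'. fst r = fst r' \<and> (\<forall>t \<in> snd r. map g t \<in> snd r'))
      (rels_of (pp_power_struct A n fs)) (rels_of B)"
    unfolding pp_power_struct_def rels_of_def snd_conv list_all2_map1
    by (rule list_all2_mono[OF assms(3)[unfolded rels_of_def]])
      (auto simp: pp_defined_qfree[OF _ assms(1)])
qed

lemma all_lists_length_Suc:
  "(\<forall>s. length s = Suc m \<longrightarrow> set s \<subseteq> D \<longrightarrow> P s) \<longleftrightarrow>
   (\<forall>x \<in> D. \<forall>s. length s = m \<longrightarrow> set s \<subseteq> D \<longrightarrow> P (x # s))"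
  by (auto simp: length_Suc_conv)

definition encode_M1'' :: "nat \<Rightarrow> nat list" where
  "encode_M1'' x = [if x = 2 then 2 else 0, x]"

definition decode_M1'' :: "nat list \<Rightarrow> nat" where
  "decode_M1'' xs = (if xs = [2, 2] then 2 else if xs = [0, 1] \<or> xs = [1, 0] then 1 else 0)"

text \<open>Variables \<open>2i\<close> and \<open>2i+1\<close> hold the pair \<open>encode_M1'' x\<close> of the \<open>i\<close>-th argument \<open>x\<close>.\<close>

definition M1''_pp_formulas :: "(nat \<times> ppf) list" where
  "M1''_pp_formulas =
    [(2, PConj (PEq 0 2) (PConj (PAtom 0 [1, 3]) (PAtom 1 [0, 1]))),
     (2, PConj (PAtom 2 [0]) (PConj (PAtom 2 [2]) (PConj (PAtom 0 [1, 3]) (PAtom 1 [0, 1])))),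
     (2, PConj (PAtom 1 [0, 1]) (PConj (PAtom 1 [2, 3]) (PAtom 1 [0, 2]))),
     (1, PConj (PAtom 2 [0]) (PAtom 1 [0, 1])),
     (1, PAtom 0 [0, 1]),
     (1, PEq 0 1),
     (1, PConj (PAtom 2 [0]) (PAtom 2 [1])),
     (1, PConj (PAtom 2 [0]) (PAtom 3 [1])),
     (1, PConj (PAtom 4 [0]) (PAtom 4 [1]))]"

lemma is_hom_encode_M1'': "is_hom encode_M1'' M1'' (pp_power_struct M1 2 M1''_pp_formulas)"
proof (rule is_hom_to_pp_power_struct)
  show "wf_struct M1''"
    by (auto simp: wf_struct_def M1''_def rels_of_def dom_of_def psi2_def psi2'_def mu2_def)
  show "list_all2 (\<lambda>r (k, \<phi>). fst r = k \<and> pp_qfree (k * 2) \<phi> \<and>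
           (\<forall>t \<in> snd r. pp_sat M1 ((!) (concat (map encode_M1'' t))) \<phi>)) (rels_of M1'') M1''_pp_formulas"
    by (auto simp: M1''_def M1''_pp_formulas_def M1_def rels_of_def encode_M1''_def psi2_def psi2'_def mu2_def)
qed (auto simp: M1_def M1''_def dom_of_def encode_M1''_def)

lemma is_hom_decode_M1'': "is_hom decode_M1'' (pp_power_struct M1 2 M1''_pp_formulas) M1''"
proof (rule is_hom_from_pp_power_struct)
  show "list_all2 (\<lambda>(k, \<phi>) r. k = fst r \<and> pp_qfree (k * 2) \<phi> \<and>
           (\<forall>s. length s = k * 2 \<longrightarrow> set s \<subseteq> dom_of M1 \<longrightarrow> pp_sat M1 ((!) s) \<phi> \<longrightarrow>
              map decode_M1'' (chunks 2 s) \<in> snd r)) M1''_pp_formulas (rels_of M1'')"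
    by (simp add: M1''_def M1''_pp_formulas_def M1_def rels_of_def dom_of_def decode_M1''_def
        psi2_def psi2'_def mu2_def all_lists_length_Suc numeral_eq_Suc chunks.simps)
qed (auto simp: M1_def M1''_def dom_of_def decode_M1''_def)

definition M1_pp_formulas :: "(nat \<times> ppf) list" where
  "M1_pp_formulas = [(2, PAtom 0 [0, 1]), (2, PAtom 2 [0, 1]),
     (1, PAtom 6 [0]), (1, PAtom 7 [0]), (1, PAtom 8 [0])]"

lemma is_hom_singleton_M1: "is_hom (\<lambda>x. [x]) M1 (pp_power_struct M1'' 1 M1_pp_formulas)"
proof (rule is_hom_to_pp_power_struct)
  show "wf_struct M1"
    by (auto simp: wf_struct_def M1_def rels_of_def dom_of_def psi2_def mu2_def)
  show "list_all2 (\<lambda>r (k, \<phi>). fst r = k \<and> pp_qfree (k * 1) \<phi> \<and>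
           (\<forall>t \<in> snd r. pp_sat M1'' ((!) (concat (map (\<lambda>x. [x]) t))) \<phi>)) (rels_of M1) M1_pp_formulas"
    by (auto simp: M1''_def M1_pp_formulas_def M1_def rels_of_def psi2_def mu2_def)
qed (auto simp: M1_def M1''_def dom_of_def)

lemma is_hom_hd_M1: "is_hom hd (pp_power_struct M1'' 1 M1_pp_formulas) M1"
proof (rule is_hom_from_pp_power_struct)
  show "list_all2 (\<lambda>(k, \<phi>) r. k = fst r \<and> pp_qfree (k * 1) \<phi> \<and>
           (\<forall>s. length s = k * 1 \<longrightarrow> set s \<subseteq> dom_of M1'' \<longrightarrow> pp_sat M1'' ((!) s) \<phi> \<longrightarrow>
              map hd (chunks 1 s) \<in> snd r)) M1_pp_formulas (rels_of M1)"
    by (simp add: M1''_def M1_pp_formulas_def M1_def rels_of_def dom_of_def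
        psi2_def mu2_def all_lists_length_Suc numeral_eq_Suc chunks.simps)
qed (auto simp: M1_def M1''_def dom_of_def all_lists_length_Suc)

theorem lemma6p4:
  shows "pp_constructs M1 M1'' \<and> pp_constructs M1'' M1"
proof
  show "pp_constructs M1 M1''"
    by (rule pp_constructs_pp_power_struct[OF _ is_hom_encode_M1'' is_hom_decode_M1'']) simp
  show "pp_constructs M1'' M1"
    by (rule pp_constructs_pp_power_struct[OF _ is_hom_singleton_M1 is_hom_hd_M1]) simp
qed

end
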